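(* Let $r \geq 2$ and let $D=\{d_1<d_2<d_3<\dotsb\}$ be an infinite set of positive integers. If there exist a real number $\delta>0$ and a positive integer $N$ such that $$d_{n+1} \geq \left(2+\frac{1}{r-1}+\delta\right)d_n \quad\text{for all } n \geq N,$$ then $D$ is not $r$-accessible; that is, $\operatorname{doa}(D) \leq r-1$.
   Context: An $r$-coloring of a set $A$ is a function $\chi:A\to\{1,\dots,r\}$. For $D\subseteq\mathbb{N}=\{1,2,3,\dots\}$, a $k$-term $D$-diffsequence is a sequence of integers $x_1,\dots,x_k$ with $x_{i+1}-x_i\in D$ for all $1\le i\le k-1$. A set $D\subseteq\mathbb{N}$ is $r$-accessible if for every $r$-coloring of $\mathbb{N}$ and every $k\ge1$ there is a monochromatic $k$-term $D$-diffsequence in $\mathbb{N}$. The degree of accessibility $\operatorname{doa}(D)$ is the greatest positive integer $r$ for which $D$ is $r$-accessible ($\operatorname{doa}(D)=\infty$ if $D$ is $r$-accessible for all $r$). *)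

theory Defs
  imports "HOL-Analysis.Analysis" "HOL-Library.Infinite_Set"
begin

text \<open>A k-term D-diffsequence x_1,...,x_k in the positive integers, indexed here by
  i < k (x 0, ..., x (k-1)).\<close>
definition diffseq :: "nat set \<Rightarrow> nat \<Rightarrow> (nat \<Rightarrow> nat) \<Rightarrow> bool" where
  "diffseq D k x \<longleftrightarrow> (\<forall>i<k. x i \<ge> 1) \<and>
     (\<forall>i. i + 1 < k \<longrightarrow> x (i + 1) > x i \<and> x (i + 1) - x i \<in> D)"

definition r_coloring :: "nat \<Rightarrow> (nat \<Rightarrow> nat) \<Rightarrow> bool" where
  "r_coloring r chi \<longleftrightarrow> (\<forall>x\<ge>1. chi x \<in> {1..r})"

definition r_accessible :: "nat \<Rightarrow> nat set \<Rightarrow> bool" where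
  "r_accessible r D \<longleftrightarrow>
     (\<forall>chi. r_coloring r chi \<longrightarrow>
        (\<forall>k\<ge>1. \<exists>x. diffseq D k x \<and> (\<forall>i<k. \<forall>j<k. chi (x i) = chi (x j))))"

end

theory Submission
  imports Defs
begin

text \<open>Colour y by the arc, among the r equal arcs of \<real>/\<int>, that contains \<alpha>y.
  If \<alpha>d lies in [a, 1 - 1/r] modulo 1 for every d \<in> D, with a > 0, then a step by
  d \<in> D can never return to the same arc by wrapping around, so along a monochromatic
  D-diffsequence \<alpha>x(i) modulo 1 grows by at least a per step; such sequences have at most
  1/a + 1 terms.

  Such an \<alpha> exists when d(n+1) \<ge> q d(n) eventually, where b = 1 - 1/r and q b > 1 + b.
  The admissible \<alpha> for the tail form nested intervals: an interval on which
  \<alpha>d(n) sweeps a window [K + a, K + b] has length (b - a)/d(n), so on it \<alpha>d(n+1) sweeps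
  length at least (b - a)q \<ge> 1 + b - a and hence contains a full window again.
  The finitely many initial d(n) are handled by taking \<alpha> so small that \<alpha>d(n) itself
  lies in [a, b].\<close>

lemma nested_intervals_common_point:
  fixes l u :: "nat \<Rightarrow> real"
  assumes "incseq l" and "decseq u" and "\<And>n. l n \<le> u n"
  shows "\<exists>x. \<forall>n. l n \<le> x \<and> x \<le> u n"
proof -
  have lu: "l m \<le> u n" for m n
    using assms by (metis decseqD incseqD nat_le_linear order_trans)
  then have "bdd_above (range l)"
    by (auto intro: bdd_aboveI[of _ "u 0"])
  then show ?thesis
    using lu by (intro exI[of _ "Sup (range l)"]) (auto intro: cSup_upper cSup_least)
qed

text \<open>For E > 0, the least x \<ge> y with x E \<in> c + \<int>.\<close>

definition shifted_ceiling :: "real \<Rightarrow> real \<Rightarrow> real \<Rightarrow> real" where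
  "shifted_ceiling E c y = (of_int \<lceil>y * E - c\<rceil> + c) / E"

lemma shifted_ceiling_bounds:
  assumes "E > 0"
  shows "y \<le> shifted_ceiling E c y" and "shifted_ceiling E c y \<le> y + 1 / E"
proof -
  have lower: "y * E - c \<le> of_int \<lceil>y * E - c\<rceil>" and upper: "of_int \<lceil>y * E - c\<rceil> < y * E - c + 1"
    by linarith+
  from lower show "y \<le> shifted_ceiling E c y"
    unfolding shifted_ceiling_def pos_le_divide_eq[OF assms] by linarith
  have "shifted_ceiling E c y \<le> (y * E + 1) / E"
    unfolding shifted_ceiling_def using upper assms
    by (intro divide_right_mono) auto
  with assms show "shifted_ceiling E c y \<le> y + 1 / E"
    by (simp add: add_divide_distrib)
qed

lemma shifted_ceiling_mult_Ints:
  assumes "E \<noteq> 0"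
  shows "shifted_ceiling E c y * E - c \<in> \<int>"
  using assms by (simp add: shifted_ceiling_def)

primrec window_start :: "(nat \<Rightarrow> real) \<Rightarrow> real \<Rightarrow> real \<Rightarrow> nat \<Rightarrow> real" where
  "window_start e c A 0 = shifted_ceiling (e 0) c A"
| "window_start e c A (Suc m) = shifted_ceiling (e (Suc m)) c (window_start e c A m)"

lemma window_start_mult_Ints:
  assumes "e m \<noteq> 0"
  shows "window_start e c A m * e m - c \<in> \<int>"
  using assms by (cases m) (simp_all add: shifted_ceiling_mult_Ints)

lemma exists_frac_in_windows:
  fixes e :: "nat \<Rightarrow> real" and a b A B :: real
  assumes epos: "\<And>m. e m > 0"
    and egrow: "\<And>m. (1 + b - a) * e m \<le> (b - a) * e (Suc m)"
    and ab: "0 \<le> a" "a \<le> b" "b < 1"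
    and base: "1 + b - a \<le> e 0 * (B - A)"
  shows "\<exists>\<alpha>. A \<le> \<alpha> \<and> \<alpha> \<le> B \<and> (\<forall>m. a \<le> frac (\<alpha> * e m) \<and> frac (\<alpha> * e m) \<le> b)"
proof -
  define g where "g = window_start e a A"
  define u where "u m = g m + (b - a) / e m" for m
  have g0: "A \<le> g 0" "g 0 \<le> A + 1 / e 0"
    using shifted_ceiling_bounds[OF epos] by (simp_all add: g_def)
  have gSuc: "g m \<le> g (Suc m)" "g (Suc m) \<le> g m + 1 / e (Suc m)" for m
    using shifted_ceiling_bounds[OF epos] by (simp_all add: g_def)
  have "u (Suc m) \<le> u m" for m
  proof -
    have "u (Suc m) \<le> g m + (1 + b - a) / e (Suc m)"
      using gSuc(2)[of m] by (simp add: u_def add_divide_distrib diff_divide_distrib)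
    also have "(1 + b - a) / e (Suc m) \<le> (b - a) / e m"
      using egrow[of m] epos[of m] epos[of "Suc m"] by (simp add: divide_simps mult.commute)
    finally show ?thesis by (simp add: u_def)
  qed
  moreover have gu: "g m \<le> u m" for m
    using ab epos[of m] by (simp add: u_def)
  ultimately obtain \<alpha> where \<alpha>: "\<And>m. g m \<le> \<alpha> \<and> \<alpha> \<le> u m"
    using nested_intervals_common_point[of g u] gSuc(1) by (auto simp: incseq_Suc_iff decseq_Suc_iff)
  have "\<alpha> \<le> B"
  proof -
    have "\<alpha> \<le> A + (1 + b - a) / e 0"
      using \<alpha>[of 0] g0 by (simp add: u_def add_divide_distrib diff_divide_distrib)
    also have "(1 + b - a) / e 0 \<le> B - A"
      using base epos[of 0] by (simp add: divide_simps mult.commute)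
    finally show ?thesis by simp
  qed
  moreover have "a \<le> frac (\<alpha> * e m) \<and> frac (\<alpha> * e m) \<le> b" for m
  proof -
    have lattice: "g m * e m - a \<in> \<int>"
      using window_start_mult_Ints[of e m a A] epos[of m] by (simp add: g_def)
    have "g m * e m \<le> \<alpha> * e m" "\<alpha> * e m \<le> u m * e m"
      using \<alpha>[of m] epos[of m] by (simp_all add: mult_right_mono)
    moreover have "u m * e m = g m * e m + (b - a)"
      using epos[of m] by (simp add: u_def field_simps)
    ultimately have "frac (\<alpha> * e m) = \<alpha> * e m - (g m * e m - a)"
      using lattice ab by (subst frac_unique_iff) auto
    with \<open>g m * e m \<le> \<alpha> * e m\<close> \<open>\<alpha> * e m \<le> u m * e m\<close> \<open>u m * e m = _\<close>
    show ?thesis by simp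
  qed
  ultimately show ?thesis
    using g0(1) \<alpha>[of 0] by (intro exI[of _ \<alpha>]) auto
qed

definition arc_colour :: "nat \<Rightarrow> real \<Rightarrow> nat \<Rightarrow> nat" where
  "arc_colour r \<alpha> y = nat \<lfloor>real r * frac (\<alpha> * real y)\<rfloor> + 1"

lemma r_coloring_arc_colour:
  assumes "r > 0"
  shows "r_coloring r (arc_colour r \<alpha>)"
  unfolding r_coloring_def
proof (intro allI impI)
  fix y :: nat
  have "real r * frac (\<alpha> * real y) < real r"
    using assms frac_lt_1 by simp
  then have "nat \<lfloor>real r * frac (\<alpha> * real y)\<rfloor> < r"
    by (simp add: nat_less_iff floor_less_iff)
  then show "arc_colour r \<alpha> y \<in> {1..r}"
    by (simp add: arc_colour_def)
qed

lemma arc_colour_eq_iff: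
  "arc_colour r \<alpha> y = arc_colour r \<alpha> z \<longleftrightarrow>
     \<lfloor>real r * frac (\<alpha> * real y)\<rfloor> = \<lfloor>real r * frac (\<alpha> * real z)\<rfloor>"
  by (simp add: arc_colour_def eq_nat_nat_iff)

lemma frac_add_eq_if_same_arc:
  fixes u v :: real
  assumes "r > 0" and "frac v \<le> 1 - 1 / real r"
    and same_arc: "\<lfloor>real r * frac u\<rfloor> = \<lfloor>real r * frac (u + v)\<rfloor>"
  shows "frac (u + v) = frac u + frac v"
proof (rule ccontr)
  assume "frac (u + v) \<noteq> frac u + frac v"
  then have wrap: "frac (u + v) = frac u + frac v - 1"
    by (simp add: frac_add split: if_splits)
  have "real r * frac v \<le> real r - 1"
    using assms(1,2) by (simp add: field_simps)
  moreover have "real r * frac (u + v) = real r * frac u + real r * frac v - real r"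
    unfolding wrap by (simp add: algebra_simps)
  ultimately have "real r * frac (u + v) \<le> real r * frac u - 1"
    by linarith
  then have "\<lfloor>real r * frac (u + v)\<rfloor> \<le> \<lfloor>real r * frac u\<rfloor> - 1"
    by (metis floor_diff_of_int floor_mono of_int_1)
  with same_arc show False by simp
qed

lemma frac_increases_along_monochromatic_diffseq:
  assumes "r > 0"
    and frac_D: "\<And>d. d \<in> D \<Longrightarrow> a \<le> frac (\<alpha> * real d) \<and> frac (\<alpha> * real d) \<le> 1 - 1 / real r"
    and x: "diffseq D k x"
    and monochromatic: "\<forall>i<k. \<forall>j<k. arc_colour r \<alpha> (x i) = arc_colour r \<alpha> (x j)"
    and "i < k"
  shows "frac (\<alpha> * real (x 0)) + real i * a \<le> frac (\<alpha> * real (x i))"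
  using \<open>i < k\<close>
proof (induction i)
  case 0
  then show ?case by simp
next
  case (Suc i)
  define d where "d = x (Suc i) - x i"
  have "d \<in> D" and "x i < x (Suc i)"
    using x Suc.prems by (auto simp: diffseq_def d_def)
  then have step: "\<alpha> * real (x (Suc i)) = \<alpha> * real (x i) + \<alpha> * real d"
    unfolding d_def by (simp add: right_diff_distrib)
  have "arc_colour r \<alpha> (x i) = arc_colour r \<alpha> (x (Suc i))"
    using monochromatic Suc.prems Suc_lessD by blast
  then have "frac (\<alpha> * real (x (Suc i))) = frac (\<alpha> * real (x i)) + frac (\<alpha> * real d)"
    unfolding arc_colour_eq_iff step using frac_D[OF \<open>d \<in> D\<close>] \<open>r > 0\<close>
    by (intro frac_add_eq_if_same_arc) auto
  moreover have "frac (\<alpha> * real (x 0)) + real i * a \<le> frac (\<alpha> * real (x i))"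
    using Suc by simp
  ultimately show ?case
    using frac_D[OF \<open>d \<in> D\<close>] by (simp add: distrib_right)
qed

lemma not_r_accessible_if_frac_bounded:
  assumes "r > 0" and "a > 0"
    and frac_D: "\<And>d. d \<in> D \<Longrightarrow> a \<le> frac (\<alpha> * real d) \<and> frac (\<alpha> * real d) \<le> 1 - 1 / real r"
  shows "\<not> r_accessible r D"
proof
  assume "r_accessible r D"
  define k where "k = nat \<lceil>1 / a\<rceil> + 1"
  obtain x where x: "diffseq D k x"
    and monochromatic: "\<forall>i<k. \<forall>j<k. arc_colour r \<alpha> (x i) = arc_colour r \<alpha> (x j)"
    using \<open>r_accessible r D\<close>[unfolded r_accessible_def, rule_format,
        OF r_coloring_arc_colour[OF \<open>r > 0\<close>, of \<alpha>], of k]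
    by (auto simp: k_def)
  have "frac (\<alpha> * real (x 0)) + real (k - 1) * a \<le> frac (\<alpha> * real (x (k - 1)))"
    using frac_increases_along_monochromatic_diffseq[OF \<open>r > 0\<close> frac_D x monochromatic] by (simp add: k_def)
  moreover have "1 \<le> real (k - 1) * a"
    using real_nat_ceiling_ge[of "1 / a"] \<open>a > 0\<close> by (simp add: k_def flip: pos_divide_le_eq)
  moreover have "frac (\<alpha> * real (x (k - 1))) < 1"
    by (rule frac_lt_1)
  ultimately show False
    using frac_ge_0[of "\<alpha> * real (x 0)"] by linarith
qed

lemma exists_frac_bounded_on_lacunary:
  fixes d :: "nat \<Rightarrow> real" and q b :: real and N :: nat
  assumes "d 0 > 0" and "mono d"
    and growth: "\<And>n. n \<ge> N \<Longrightarrow> q * d n \<le> d (Suc n)"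
    and "0 < b" and "b < 1" and margin: "1 + b < q * b"
  shows "\<exists>\<alpha> a. 0 < a \<and> (\<forall>n. a \<le> frac (\<alpha> * d n) \<and> frac (\<alpha> * d n) \<le> b)"
proof -
  have dpos: "d n > 0" for n
    using \<open>d 0 > 0\<close> \<open>mono d\<close>[THEN monoD, of 0 n] by simp
  have "q > 0"
    using margin \<open>0 < b\<close> by (smt (verit) mult_nonpos_nonneg)
  define R where "R = d N / d 0"
  define a where "a = (q * b - 1 - b) / (q * R)"
    \<comment> \<open>chosen so that q (b - a R) = 1 + b: then [a/d(0), b/d(N)] is long enough to start the windows\<close>
  have "R \<ge> 1"
    using \<open>mono d\<close>[THEN monoD, of 0 N] dpos by (simp add: R_def)
  then have "a > 0"
    using margin \<open>q > 0\<close> by (simp add: a_def)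
  with \<open>R \<ge> 1\<close> have "a \<le> a * R"
    by (simp add: mult_le_cancel_left1)
  have key: "q * (b - a * R) = 1 + b"
    using \<open>R \<ge> 1\<close> \<open>q > 0\<close> by (simp add: a_def field_simps)
  then have "b - a * R > 0"
    using \<open>q > 0\<close> \<open>0 < b\<close> by (smt (verit) zero_less_mult_iff)
  have "a \<le> b"
    using \<open>a \<le> a * R\<close> \<open>b - a * R > 0\<close> by linarith
  have "1 + b - a \<le> (b - a) * q"
    using key \<open>a > 0\<close> \<open>a \<le> a * R\<close> \<open>q > 0\<close> by (smt (verit) mult_left_mono mult.commute)
  define e where "e m = d (Suc (N + m))" for m
  define A where "A = a / d 0"
  define B where "B = b / d N"
  have "\<exists>\<alpha>. A \<le> \<alpha> \<and> \<alpha> \<le> B \<and> (\<forall>m. a \<le> frac (\<alpha> * e m) \<and> frac (\<alpha> * e m) \<le> b)"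
  proof (rule exists_frac_in_windows)
    show "e m > 0" for m
      using dpos by (simp add: e_def)
    show "(1 + b - a) * e m \<le> (b - a) * e (Suc m)" for m
    proof -
      have "(1 + b - a) * e m \<le> (b - a) * (q * e m)"
        using \<open>1 + b - a \<le> (b - a) * q\<close> dpos by (simp add: e_def mult_right_mono mult.assoc)
      also have "\<dots> \<le> (b - a) * e (Suc m)"
        using growth[of "Suc (N + m)"] \<open>a \<le> b\<close> by (simp add: e_def mult_left_mono)
      finally show ?thesis .
    qed
    have "B - A = (b - a * R) / d N"
      using dpos[of 0] dpos[of N] by (simp add: A_def B_def R_def field_simps)
    then have "B - A > 0"
      using \<open>b - a * R > 0\<close> dpos[of N] by simp
    have "q * (b - a * R) = q * d N * (B - A)"
      using \<open>B - A = _\<close> dpos[of N] by simp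
    also have "q * d N * (B - A) \<le> e 0 * (B - A)"
      using growth[of N] \<open>B - A > 0\<close> by (simp add: e_def mult_right_mono)
    finally show "1 + b - a \<le> e 0 * (B - A)"
      using key \<open>a > 0\<close> by linarith
  qed (use \<open>a > 0\<close> \<open>a \<le> b\<close> \<open>b < 1\<close> in auto)
  then obtain \<alpha> where "A \<le> \<alpha>" "\<alpha> \<le> B" and tail: "\<And>m. a \<le> frac (\<alpha> * e m) \<and> frac (\<alpha> * e m) \<le> b"
    by blast
  have "a \<le> frac (\<alpha> * d n) \<and> frac (\<alpha> * d n) \<le> b" for n
  proof (cases "n \<le> N")
    case True
    have "a \<le> A * d n"
      using \<open>mono d\<close>[THEN monoD, of 0 n] dpos \<open>a > 0\<close> by (simp add: A_def field_simps)
    also have "\<dots> \<le> \<alpha> * d n"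
      using \<open>A \<le> \<alpha>\<close> dpos[of n] by (simp add: mult_right_mono)
    finally have "a \<le> \<alpha> * d n" .
    moreover have "\<alpha> * d n \<le> b"
    proof -
      have "\<alpha> * d n \<le> B * d n"
        using \<open>\<alpha> \<le> B\<close> dpos[of n] by (simp add: mult_right_mono)
      also have "\<dots> \<le> b"
        using \<open>mono d\<close>[THEN monoD, OF True] dpos \<open>0 < b\<close> by (simp add: B_def field_simps)
      finally show ?thesis .
    qed
    ultimately show ?thesis
      using \<open>a > 0\<close> \<open>b < 1\<close> by (simp add: frac_eq)
  next
    case False
    then obtain m where "n = Suc (N + m)"
      by (metis add_Suc_right less_imp_Suc_add not_le)
    then show ?thesis
      using tail[of m] by (simp add: e_def)
  qed
  with \<open>a > 0\<close> show ?thesis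
    by blast
qed

theorem theorem1:
  fixes r :: nat and D :: "nat set"
  assumes "r \<ge> 2"
    and "D \<subseteq> {1..}"
    and "infinite D"
    and "\<exists>\<delta>::real. \<delta> > 0 \<and> (\<exists>N::nat. N \<ge> 1 \<and>
           (\<forall>n\<ge>N. real (enumerate D n) \<ge>
              (2 + 1 / (real r - 1) + \<delta>) * real (enumerate D (n - 1))))"
  shows "\<not> r_accessible r D"
proof -
  obtain \<delta> :: real and N :: nat where "\<delta> > 0"
    and growth: "\<And>n. n \<ge> N \<Longrightarrow>
      (2 + 1 / (real r - 1) + \<delta>) * real (enumerate D (n - 1)) \<le> real (enumerate D n)"
    using assms(4) by blast
  define q where "q = 2 + 1 / (real r - 1) + \<delta>"
  define b where "b = 1 - 1 / real r"
  define d where "d n = real (enumerate D n)" for n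
  have "real r \<ge> 2"
    using \<open>r \<ge> 2\<close> by simp
  then have "0 < b" "b < 1" and "q * b = 1 + b + \<delta> * b"
    by (simp_all add: b_def q_def field_simps)
  then have "1 + b < q * b"
    using \<open>\<delta> > 0\<close> by simp
  have "d 0 > 0"
    using enumerate_in_set[OF \<open>infinite D\<close>, of 0] \<open>D \<subseteq> {1..}\<close> by (auto simp: d_def)
  have "mono d"
    using \<open>infinite D\<close> by (intro monoI) (simp add: d_def)
  have "q * d n \<le> d (Suc n)" if "n \<ge> N - 1" for n
    using growth[of "Suc n"] that by (simp add: q_def d_def)
  then obtain \<alpha> a where "a > 0" and frac_d: "\<And>n. a \<le> frac (\<alpha> * d n) \<and> frac (\<alpha> * d n) \<le> b"
    using exists_frac_bounded_on_lacunary[OF \<open>d 0 > 0\<close> \<open>mono d\<close> _ \<open>0 < b\<close> \<open>b < 1\<close> \<open>1 + b < q * b\<close>]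
    by blast
  show ?thesis
  proof (rule not_r_accessible_if_frac_bounded)
    show "r > 0"
      using \<open>r \<ge> 2\<close> by simp
    show "a \<le> frac (\<alpha> * real x) \<and> frac (\<alpha> * real x) \<le> 1 - 1 / real r" if "x \<in> D" for x
    proof -
      obtain n where "enumerate D n = x"
        using enumerate_Ex[OF \<open>infinite D\<close> \<open>x \<in> D\<close>] by blast
      with frac_d[of n] show ?thesis
        by (simp add: d_def b_def)
    qed
  qed fact
qed

end
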